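(* Let $q\in\mathbb{C}$ with $|q|<1$ and let $\mathbf{s}=(s_1,\dots,s_d)\in\mathbb{Z}^d$. Then: (i) $\zeta_q^{\mathrm{I}}[\mathbf{s}]$ converges if $s_1+\dots+s_j>j$ for all $j=1,\dots,d$; (ii) $\zeta_q^{\mathrm{II}}[\mathbf{s}]$ converges if $s_1+\dots+s_j>0$ for all $j=1,\dots,d$; (iii) $\zeta_q^{\mathrm{III}}[\mathbf{s}]$ always converges; (iv) $\zeta_q^{\mathrm{IV}}[\mathbf{s}]$ converges if $s_1+\dots+s_j>1$ for all $j=1,\dots,d$.
   Context: For integer tuples $\mathbf{t}=(t_1,\dots,t_d)$, $\mathbf{s}=(s_1,\dots,s_d)$ and $|q|<1$ define $$\zeta_q^{\mathbf{t}}[\mathbf{s}]=(1-q)^{s_1+\dots+s_d}\sum_{k_1>\dots>k_d>0}\frac{q^{k_1t_1+\dots+k_dt_d}}{(1-q^{k_1})^{s_1}\cdots(1-q^{k_d})^{s_d}}.$$ Then $\zeta_q^{\mathrm{I}}[\mathbf{s}]:=\zeta_q^{(s_1-1,\dots,s_d-1)}[\mathbf{s}]$, $\zeta_q^{\mathrm{II}}[\mathbf{s}]:=\zeta_q^{(s_1,\dots,s_d)}[\mathbf{s}]$, $\zeta_q^{\mathrm{III}}[\mathbf{s}]:=\zeta_q^{(1,0,\dots,0)}[\mathbf{s}]$, $\zeta_q^{\mathrm{IV}}[\mathbf{s}]:=\zeta_q^{(s_1-1,s_2,\dots,s_d)}[\mathbf{s}]$. *)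

theory Defs
  imports "HOL-Analysis.Analysis"
begin

definition qmzv_index :: "nat \<Rightarrow> nat list set" where
  "qmzv_index d = {k. length k = d \<and> sorted_wrt (>) k \<and> (\<forall>x\<in>set k. 0 < x)}"

definition qmzv_term :: "int list \<Rightarrow> int list \<Rightarrow> complex \<Rightarrow> nat list \<Rightarrow> complex" where
  "qmzv_term t s q k =
     (\<Prod>i<length s. q powi (int (k ! i) * t ! i) / (1 - q ^ (k ! i)) powi (s ! i))"

text \<open>Convergence of zeta_q^t[s]: the multiple series converges (unconditionally,
  which for complex series is absolute convergence).\<close>
definition qmzv_converges :: "int list \<Rightarrow> int list \<Rightarrow> complex \<Rightarrow> bool" where
  "qmzv_converges t s q \<longleftrightarrow> qmzv_term t s q summable_on qmzv_index (length s)"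

definition qmzv :: "int list \<Rightarrow> int list \<Rightarrow> complex \<Rightarrow> complex" where
  "qmzv t s q = (1 - q) powi (sum_list s) * infsum (qmzv_term t s q) (qmzv_index (length s))"

definition tI :: "int list \<Rightarrow> int list" where "tI s = map (\<lambda>x. x - 1) s"
definition tII :: "int list \<Rightarrow> int list" where "tII s = s"
definition tIII :: "int list \<Rightarrow> int list" where
  "tIII s = (case s of [] \<Rightarrow> [] | _ # xs \<Rightarrow> 1 # map (\<lambda>_. 0) xs)"
definition tIV :: "int list \<Rightarrow> int list" where
  "tIV s = (case s of [] \<Rightarrow> [] | x # xs \<Rightarrow> (x - 1) # xs)"

end

theory Submission
  imports Defs
begin

text \<open>
  All four series are instances of one criterion: \<open>\<zeta>\<^sub>q\<^sup>t[s]\<close> converges as soon as every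
  partial sum \<open>t\<^sub>1 + \<dots> + t\<^sub>j\<close> is positive. The denominators \<open>(1 - q\<^sup>k)\<^sup>s\<close> stay within
  constant factors of \<open>1\<close>, so everything hinges on the exponent \<open>\<Sum> k\<^sub>i t\<^sub>i\<close>. By Abel
  summation it equals \<open>\<Sum> (k\<^sub>i - k\<^sub>i\<^sub>+\<^sub>1) (t\<^sub>1 + \<dots> + t\<^sub>i)\<close>, which is at least \<open>k\<^sub>1\<close> because
  the \<open>k\<^sub>i\<close> decrease and the partial sums are \<open>\<ge> 1\<close>; and \<open>k\<^sub>1 \<ge> (k\<^sub>1 + \<dots> + k\<^sub>d) / d\<close>.
  Hence the summand is \<open>O(\<rho>\<^bsup>k\<^sub>1 + \<dots> + k\<^sub>d\<^esup>)\<close> with \<open>\<rho> = |q|\<^bsup>1/d\<^esup> < 1\<close>, a geometric bound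
  that is summable over all of \<open>\<nat>\<^sup>d\<close>.
\<close>

lemma summable_on_power_sum_list:
  fixes \<rho> :: real
  assumes "0 \<le> \<rho>" "\<rho> < 1"
  shows "(\<lambda>k. \<rho> ^ sum_list k) summable_on {k :: nat list. length k = d}"
proof (induction d)
  case 0
  have "{k :: nat list. length k = 0} = {[]}" by auto
  then show ?case by simp
next
  case (Suc d)
  define S where "S = infsum (\<lambda>k. \<rho> ^ sum_list k) {k :: nat list. length k = d}"
  have tail: "((\<lambda>k. \<rho> ^ sum_list k) has_sum S) {k :: nat list. length k = d}"
    using Suc unfolding S_def by (simp add: summable_iff_has_sum_infsum)
  have "(\<lambda>n :: nat. \<rho> ^ n) summable_on UNIV"
    using assms by (subst summable_on_UNIV_nonneg_real_iff) (auto intro: summable_geometric)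
  then have head: "(\<lambda>n. \<rho> ^ n * S) summable_on UNIV"
    by (rule summable_on_cmult_left)
  have "(\<lambda>(n, k). \<rho> ^ n * \<rho> ^ sum_list k) summable_on UNIV \<times> {k :: nat list. length k = d}"
    by (rule summable_on_SigmaI[where g = "\<lambda>n. \<rho> ^ n * S"])
      (use tail head assms in \<open>auto intro: has_sum_cmult_right\<close>)
  moreover have "inj_on (\<lambda>(n, k). n # k) (UNIV \<times> {k :: nat list. length k = d})"
    by (auto simp: inj_on_def)
  moreover have "{k :: nat list. length k = Suc d}
      = (\<lambda>(n, k). n # k) ` (UNIV \<times> {k :: nat list. length k = d})"
    by (auto simp: length_Suc_conv image_iff)
  ultimately show ?case
    by (simp add: summable_on_reindex o_def case_prod_unfold power_add)
qed

lemma sum_list_le_length_mult_hd: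
  assumes "sorted_wrt (>) k"
  shows "sum_list k \<le> length k * hd k"
proof (cases k)
  case (Cons a k')
  have "(\<Sum>x\<leftarrow>k. x) \<le> (\<Sum>x\<leftarrow>k. hd k)"
    using assms Cons by (intro sum_list_mono) auto
  then show ?thesis by (simp add: sum_list_triv)
qed simp

text \<open>Abel summation: merging \<open>t\<^sub>1\<close> into \<open>t\<^sub>2\<close> removes \<open>(k\<^sub>1 - k\<^sub>2) t\<^sub>1 \<ge> k\<^sub>1 - k\<^sub>2\<close>.\<close>
lemma hd_le_sum_list_map2_mult:
  fixes k :: "nat list" and t :: "int list"
  assumes "length k = length t" "k \<noteq> []" "sorted_wrt (>) k"
    and "\<forall>j\<in>{1..length t}. sum_list (take j t) \<ge> 1"
  shows "int (hd k) \<le> sum_list (map2 (\<lambda>a b. int a * b) k t)"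
  using assms
proof (induction k arbitrary: t)
  case (Cons a k')
  show ?case
  proof (cases k')
    case Nil
    then obtain u where t: "t = [u]" using Cons.prems by (cases t) auto
    have "u \<ge> 1" using Cons.prems(4) t by (auto dest: bspec[of _ _ 1])
    then show ?thesis using t Nil by (simp add: mult_le_cancel_left1)
  next
    case (Cons b k'')
    then obtain u v t' where t: "t = u # v # t'"
      using Cons.prems(1) by (cases t; cases "tl t") auto
    have "u \<ge> 1" using Cons.prems(4) t by (auto dest: bspec[of _ _ 1])
    moreover have "b < a" using Cons.prems(3) \<open>k' = b # k''\<close> by auto
    ultimately have gap: "int a - int b \<le> (int a - int b) * u"
      by (simp add: mult_le_cancel_left1)
    have "\<forall>j\<in>{1..length ((u + v) # t')}. sum_list (take j ((u + v) # t')) \<ge> 1"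
    proof
      fix j assume j: "j \<in> {1..length ((u + v) # t')}"
      then obtain j' where j': "j = Suc j'" by (cases j) auto
      have "Suc j \<in> {1..length t}" using j t by auto
      then have "sum_list (take (Suc j) t) \<ge> 1" using Cons.prems(4) by blast
      then show "sum_list (take j ((u + v) # t')) \<ge> 1" using t j' by simp
    qed
    then have "int b \<le> sum_list (map2 (\<lambda>a b. int a * b) k' ((u + v) # t'))"
      using Cons.IH[of "(u + v) # t'"] Cons.prems t \<open>k' = b # k''\<close> by auto
    moreover have "sum_list (map2 (\<lambda>a b. int a * b) (a # k') t)
        = (int a - int b) * u + sum_list (map2 (\<lambda>a b. int a * b) k' ((u + v) # t'))"
      using t \<open>k' = b # k''\<close> by (simp add: algebra_simps)
    ultimately show ?thesis using gap by simp
  qed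
qed simp

lemma norm_one_minus_power_bounds:
  fixes q :: "'a :: real_normed_algebra_1"
  assumes "norm q \<le> 1" "n > 0"
  shows "1 - norm q \<le> norm (1 - q ^ n)" "norm (1 - q ^ n) \<le> 1 + norm q"
proof -
  have "norm (q ^ n) \<le> norm q ^ n" by (rule norm_power_ineq)
  also have "\<dots> \<le> norm q ^ 1" using assms by (intro power_decreasing) auto
  finally have "norm (q ^ n) \<le> norm q" by simp
  then show "1 - norm q \<le> norm (1 - q ^ n)" "norm (1 - q ^ n) \<le> 1 + norm q"
    by (metis norm_one norm_triangle_ineq2 order_trans diff_left_mono,
        metis norm_one norm_triangle_ineq4 order_trans add_left_mono)
qed

lemma power_nat_abs_le_power_int:
  fixes c m :: real
  assumes "0 < m" "m \<le> c" "c \<le> 1 / m"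
  shows "m ^ nat \<bar>n\<bar> \<le> c powi n"
proof (cases "n \<ge> 0")
  case True
  then show ?thesis using assms by (simp add: power_int_def power_mono)
next
  case False
  have "m \<le> inverse c" using assms by (simp add: field_simps inverse_eq_divide)
  then show ?thesis using False assms by (simp add: power_int_def power_mono)
qed

lemma prod_power_int:
  fixes x :: "'a :: field"
  assumes "finite A" "x \<noteq> 0"
  shows "(\<Prod>i\<in>A. x powi f i) = x powi (\<Sum>i\<in>A. f i)"
  using assms by (induction A rule: finite_induct) (auto simp: power_int_add)

lemma norm_qmzv_factor_le:
  fixes q :: complex
  assumes "norm q < 1" "n > 0"
  shows "norm (q powi e / (1 - q ^ n) powi s) \<le> norm q powi e * (1 / (1 - norm q)) ^ nat \<bar>s\<bar>"
proof -
  let ?c = "norm (1 - q ^ n)" and ?m = "1 - norm q"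
  have "1 + norm q \<le> 1 / ?m" using assms by (simp add: field_simps)
  then have "?m ^ nat \<bar>s\<bar> \<le> ?c powi s"
    using assms norm_one_minus_power_bounds[of q n] by (intro power_nat_abs_le_power_int) auto
  moreover have "?m ^ nat \<bar>s\<bar> > 0" using assms by simp
  ultimately have "norm q powi e / ?c powi s \<le> norm q powi e / ?m ^ nat \<bar>s\<bar>"
    by (intro divide_left_mono) auto
  then show ?thesis by (simp add: norm_divide norm_power_int power_one_over)
qed

lemma norm_qmzv_term_le:
  fixes q :: complex
  assumes "norm q < 1" "q \<noteq> 0" "length k = length s" "length t = length s" "\<forall>x\<in>set k. 0 < x"
  shows "norm (qmzv_term t s q k)
    \<le> (\<Prod>i<length s. (1 / (1 - norm q)) ^ nat \<bar>s ! i\<bar>)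
      * norm q powi sum_list (map2 (\<lambda>a b. int a * b) k t)"
proof -
  have "norm (qmzv_term t s q k)
      = (\<Prod>i<length s. norm (q powi (int (k ! i) * t ! i) / (1 - q ^ (k ! i)) powi (s ! i)))"
    unfolding qmzv_term_def by (simp add: prod_norm)
  also have "\<dots> \<le> (\<Prod>i<length s. norm q powi (int (k ! i) * t ! i) * (1 / (1 - norm q)) ^ nat \<bar>s ! i\<bar>)"
    using assms by (intro prod_mono conjI norm_qmzv_factor_le) (auto simp: nth_mem)
  also have "\<dots> = (\<Prod>i<length s. (1 / (1 - norm q)) ^ nat \<bar>s ! i\<bar>)
      * norm q powi sum_list (map2 (\<lambda>a b. int a * b) k t)"
    using assms by (simp add: prod.distrib prod_power_int sum_list_sum_nth atLeast0LessThan)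
  finally show ?thesis .
qed

lemma qmzv_term_geometric_bound:
  fixes q :: complex
  assumes "norm q < 1" "length t = length s" "s \<noteq> []"
    and "\<forall>j\<in>{1..length s}. sum_list (take j t) > 0"
  obtains C where "\<And>k. k \<in> qmzv_index (length s)
    \<Longrightarrow> norm (qmzv_term t s q k) \<le> C * root (length s) (norm q) ^ sum_list k"
proof (cases "q = 0")
  case True
  have "0 < sum_list (take 1 t)" using assms by (auto simp: Suc_le_eq)
  then have "t ! 0 > 0" using assms by (cases t) auto
  then have "qmzv_term t s q k = 0" if "k \<in> qmzv_index (length s)" for k
    using that \<open>q = 0\<close> assms(3) unfolding qmzv_index_def qmzv_term_def
    by (intro prod_zero bexI[of _ 0]) (auto simp: nth_mem power_int_def)
  then show ?thesis by (intro that[of 0]) auto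
next
  case False
  define d where "d = length s"
  define r where "r = norm q"
  define \<rho> where "\<rho> = root d r"
  have "0 \<le> r" "r \<le> 1" "0 < d" using assms r_def d_def by auto
  have \<rho>: "0 \<le> \<rho>" "\<rho> \<le> 1" "\<rho> ^ d = r"
    using \<open>0 \<le> r\<close> \<open>r \<le> 1\<close> \<open>0 < d\<close> by (auto simp: \<rho>_def real_root_ge_zero)
  define C where "C = (\<Prod>i<d. (1 / (1 - r)) ^ nat \<bar>s ! i\<bar>)"
  have "C \<ge> 0" using assms by (auto simp: C_def r_def intro!: prod_nonneg)
  show ?thesis
  proof (rule that[of C])
    fix k assume "k \<in> qmzv_index (length s)"
    then have k: "length k = d" "sorted_wrt (>) k" "\<forall>x\<in>set k. 0 < x" "k \<noteq> []"
      using assms(3) unfolding qmzv_index_def d_def by auto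
    define E where "E = sum_list (map2 (\<lambda>a b. int a * b) k t)"
    have "int (hd k) \<le> E"
      unfolding E_def using k assms by (intro hd_le_sum_list_map2_mult) (auto simp: d_def)
    then have "r powi E \<le> r ^ hd k"
      using \<open>0 \<le> r\<close> \<open>r \<le> 1\<close> by (simp add: power_int_def power_decreasing)
    also have "\<dots> = \<rho> ^ (d * hd k)" by (simp add: \<rho> power_mult)
    also have "\<dots> \<le> \<rho> ^ sum_list k"
      using \<rho> sum_list_le_length_mult_hd[OF k(2)] k(1) by (intro power_decreasing) auto
    finally have "r powi E \<le> \<rho> ^ sum_list k" .
    moreover have "norm (qmzv_term t s q k) \<le> C * r powi E"
      unfolding C_def E_def r_def d_def using assms k False
      by (intro norm_qmzv_term_le) (auto simp: d_def)
    ultimately show "norm (qmzv_term t s q k) \<le> C * root (length s) (norm q) ^ sum_list k"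
      using \<open>C \<ge> 0\<close> unfolding \<rho>_def r_def d_def by (meson mult_left_mono order_trans)
  qed
qed

lemma qmzv_converges_if_partial_sums_pos:
  fixes q :: complex
  assumes "norm q < 1" "length t = length s"
    and "\<forall>j\<in>{1..length s}. sum_list (take j t) > 0"
  shows "qmzv_converges t s q"
proof (cases "s = []")
  case True
  then have "qmzv_index (length s) = {[]}" unfolding qmzv_index_def by auto
  then show ?thesis unfolding qmzv_converges_def by simp
next
  case False
  let ?\<rho> = "root (length s) (norm q)"
  obtain C where C: "\<And>k. k \<in> qmzv_index (length s)
      \<Longrightarrow> norm (qmzv_term t s q k) \<le> C * ?\<rho> ^ sum_list k"
    using qmzv_term_geometric_bound[OF assms(1,2) False assms(3)] by blast
  have "(\<lambda>k. ?\<rho> ^ sum_list k) summable_on {k :: nat list. length k = length s}"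
    using assms False by (intro summable_on_power_sum_list) (auto simp: real_root_ge_zero)
  then have "(\<lambda>k. C * ?\<rho> ^ sum_list k) summable_on qmzv_index (length s)"
    by (rule summable_on_subset[OF summable_on_cmult_right]) (auto simp: qmzv_index_def)
  then have "(\<lambda>k. norm (qmzv_term t s q k)) summable_on qmzv_index (length s)"
    by (rule summable_on_comparison_test) (use C in auto)
  then show ?thesis unfolding qmzv_converges_def by (rule abs_summable_summable)
qed

lemma length_tI [simp]: "length (tI s) = length s"
  and length_tII [simp]: "length (tII s) = length s"
  and length_tIII [simp]: "length (tIII s) = length s"
  and length_tIV [simp]: "length (tIV s) = length s"
  by (cases s; simp add: tI_def tII_def tIII_def tIV_def)+

lemma sum_list_map_minus_one: "sum_list (map (\<lambda>x. x - 1) xs) = sum_list xs - int (length xs)"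
  by (induction xs) auto

lemma sum_list_take_tI: "j \<le> length s \<Longrightarrow> sum_list (take j (tI s)) = sum_list (take j s) - int j"
  by (simp add: tI_def take_map sum_list_map_minus_one)

lemma sum_list_take_tIII: "0 < j \<Longrightarrow> j \<le> length s \<Longrightarrow> sum_list (take j (tIII s)) = 1"
  by (cases s; cases j) (simp_all add: tIII_def take_map sum_list_triv)

lemma sum_list_take_tIV: "0 < j \<Longrightarrow> j \<le> length s \<Longrightarrow> sum_list (take j (tIV s)) = sum_list (take j s) - 1"
  by (cases s; cases j) (simp_all add: tIV_def)

theorem corollary2p2:
  fixes q :: complex and s :: "int list"
  assumes "norm q < 1"
  shows "((\<forall>j\<in>{1..length s}. sum_list (take j s) > int j) \<longrightarrow> qmzv_converges (tI s) s q)
    \<and> ((\<forall>j\<in>{1..length s}. sum_list (take j s) > 0) \<longrightarrow> qmzv_converges (tII s) s q)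
    \<and> qmzv_converges (tIII s) s q
    \<and> ((\<forall>j\<in>{1..length s}. sum_list (take j s) > 1) \<longrightarrow> qmzv_converges (tIV s) s q)"
  using assms
  by (intro conjI impI qmzv_converges_if_partial_sums_pos)
    (auto simp: tII_def sum_list_take_tI sum_list_take_tIII sum_list_take_tIV)

end
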